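(* Let $k\ge 0$ and $n\ge 2k+2$ be integers and let $t_1<t_2<\dots<t_{n+1}$ be real numbers. Then there is $\lambda_0\in\mathbb R$ such that for every $\lambda\ge\lambda_0$ the polytope \[ P:=\mathrm{conv}\Big(\{(t_i,t_i^2,\dots,t_i^{2k+2})^T : i\in[n+1]\}\ \cup\ \{(t_i,t_i^2,\dots,t_i^{2k+1},\lambda-t_i^{2k+2})^T : i\in[n+1]\}\Big)\subset\mathbb R^{2k+2} \] is a $(k,(1,n))$-PSN polytope of dimension $2k+2$, i.e. its $k$-skeleton is combinatorially equivalent to that of $\Delta_1\times\Delta_n$.
   Context: $\Delta_m$ denotes the $m$-dimensional simplex. For $\mathbf n=(n_1,\dots,n_r)$ with $r\ge1$ and all $n_i\ge1$, $\Delta_{\mathbf n}:=\Delta_{n_1}\times\dots\times\Delta_{n_r}$. The $k$-skeleton of a polytope is the poset of its faces of dimension at most $k$; two $k$-skeleta are combinatorially equivalent if these posets are isomorphic. For $k\ge0$, a convex polytope is $(k,\mathbf n)$-PSN if its $k$-skeleton is combinatorially equivalent to that of $\Delta_{\mathbf n}$. *)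

theory Defs
  imports "HOL-Analysis.Analysis"
begin

definition std_simplex :: "(real^'m) set" where
  "std_simplex = {x. (\<forall>i. 0 \<le> x $ i) \<and> (\<Sum>i\<in>UNIV. x $ i) = 1}"

definition skeleton :: "int \<Rightarrow> 'a::euclidean_space set \<Rightarrow> 'a set set" where
  "skeleton k P = {F. F face_of P \<and> aff_dim F \<le> k}"

definition skel_equiv :: "int \<Rightarrow> 'a::euclidean_space set \<Rightarrow> 'b::euclidean_space set \<Rightarrow> bool" where
  "skel_equiv k P Q \<longleftrightarrow>
     (\<exists>f. bij_betw f (skeleton k P) (skeleton k Q) \<and>
          (\<forall>F\<in>skeleton k P. \<forall>G\<in>skeleton k P. F \<subseteq> G \<longleftrightarrow> f F \<subseteq> f G))"

text \<open>A vector in real^'d given by coordinates indexed 1..D, via a coordinate labelling e.\<close>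
definition coords :: "(nat \<Rightarrow> 'd::finite) \<Rightarrow> nat \<Rightarrow> (nat \<Rightarrow> real) \<Rightarrow> real^'d" where
  "coords e D f = (\<chi> j. f (inv_into {1..D} e j))"

end

theory Submission
  imports Defs "HOL-Computational_Algebra.Polynomial"
begin

(* Proof idea: the polytope is a prism-like lift of the cyclic polytope.  Index its 2(n+1) points
   by bool \<times> {1..n+1}: (False, m) is the moment-curve point (t m, t m ^ 2, ..., t m ^ D) with
   D = 2k + 2, and (True, m) is that point raised in the last coordinate by mu m = lam - 2 t m ^ D,
   which is positive once lam is large.  The vertices of \<Delta>\<^sub>1 \<times> \<Delta>\<^sub>n carry the same indices.

   1. For a finite point family, the faces of dimension at most k of its convex hull are the hulls
      of the index sets cut out by supporting hyperplanes ("exposed index sets") of that dimension,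
      and taking hulls is an order embedding on them.  Hence two families with the same
      low-dimensional exposed index sets have combinatorially equivalent k-skeleta.
   2. For a "prism configuration" (each top point is its bottom point plus a positive multiple of
      one vector u) these index sets are exactly the rectangles A \<times> T with |A| + |T| \<le> k + 2,
      provided all such rectangles are exposed, any k + 2 points of one level are affinely
      independent, and any k + 1 bottom points lie on a hyperplane transversal to u.
   3. The product of simplices satisfies this via coordinate functionals.  The moment prism does
      via the functionals whose coordinates are the coefficients of a polynomial: they evaluate the
      polynomial along the moment curve, so nonnegative polynomials with prescribed zeros expose
      rectangles; their degree stays at most D exactly because |T| \<le> k + 1.
   The theorem follows by choosing lam above all values 2 t m ^ D. *)

section \<open>Affine dimension of point families\<close>

lemma aff_dim_insert_off_hyperplane:
  fixes S :: "'a::euclidean_space set"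
  assumes "\<forall>y\<in>S. a \<bullet> y = b" and "a \<bullet> z \<noteq> b"
  shows "aff_dim (insert z S) = aff_dim S + 1"
proof -
  have "affine hull S \<subseteq> {y. a \<bullet> y = b}"
    by (rule hull_minimal) (use assms(1) affine_hyperplane in auto)
  then have "z \<notin> affine hull S"
    using assms(2) by auto
  then show ?thesis
    by (simp add: aff_dim_insert)
qed

lemma aff_dim_image_by_separation:
  fixes f :: "'i \<Rightarrow> 'a::euclidean_space"
  assumes "finite U"
    and "\<And>U' j. U' \<subseteq> U \<Longrightarrow> j \<in> U - U' \<Longrightarrow> \<exists>a b. (\<forall>i\<in>U'. a \<bullet> f i = b) \<and> a \<bullet> f j \<noteq> b"
  shows "aff_dim (f ` U) = int (card U) - 1"
  using assms
proof (induction U rule: finite_induct)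
  case empty
  then show ?case by simp
next
  case (insert x F)
  have IH: "aff_dim (f ` F) = int (card F) - 1"
    using insert.prems by (intro insert.IH) blast
  obtain a b where "\<forall>i\<in>F. a \<bullet> f i = b" "a \<bullet> f x \<noteq> b"
    using insert.prems[of F x] insert.hyps(2) by auto
  then have "aff_dim (f ` insert x F) = aff_dim (f ` F) + 1"
    using aff_dim_insert_off_hyperplane[of "f ` F" a b "f x"] by simp
  then show ?case
    using IH insert.hyps by simp
qed

lemma aff_dim_prism_le:
  fixes p q :: "'i \<Rightarrow> 'a::euclidean_space"
  assumes "finite T" and "\<And>i. i \<in> T \<Longrightarrow> q i = p i + \<theta> i *\<^sub>R u"
  shows "aff_dim (p ` T \<union> q ` T) \<le> int (card T)"
proof (cases "T = {}")
  case True
  then show ?thesis by simp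
next
  case False
  then obtain i0 where i0: "i0 \<in> T" by blast
  define W where "W = insert (p i0 + u) (p ` T)"
  have "q i \<in> affine hull W" if "i \<in> T" for i
  proof -
    have "p i + \<theta> i *\<^sub>R ((p i0 + u) - p i0) \<in> affine hull W"
      by (rule mem_affine_3_minus) (use that i0 in \<open>auto simp: W_def hull_inc\<close>)
    then show ?thesis
      using assms(2)[OF that] by simp
  qed
  then have "p ` T \<union> q ` T \<subseteq> affine hull W"
    by (auto simp: W_def hull_inc)
  then have "aff_dim (p ` T \<union> q ` T) \<le> aff_dim W"
    using aff_dim_subset aff_dim_affine_hull by metis
  also have "\<dots> \<le> int (card W) - 1"
    by (rule aff_dim_le_card) (simp add: W_def assms(1))
  also have "card W \<le> Suc (card (p ` T))"
    using assms(1) by (simp add: W_def card_insert_if)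
  also have "card (p ` T) \<le> card T"
    using assms(1) by (rule card_image_le)
  finally show ?thesis by simp
qed

section \<open>Faces of the convex hull of a finite point family\<close>

definition exposed_subsets :: "('i \<Rightarrow> 'a::real_inner) \<Rightarrow> 'i set \<Rightarrow> 'i set set" where
  "exposed_subsets v I = {{x\<in>I. a \<bullet> v x = b} | a b. \<forall>x\<in>I. a \<bullet> v x \<le> b}"

lemma exposed_subsetsI:
  assumes "\<forall>x\<in>I. a \<bullet> v x \<le> b" and "S = {x\<in>I. a \<bullet> v x = b}"
  shows "S \<in> exposed_subsets v I"
  using assms unfolding exposed_subsets_def by blast

lemma exposed_subsetsE:
  assumes "S \<in> exposed_subsets v I"
  obtains a b where "\<forall>x\<in>I. a \<bullet> v x \<le> b" and "S = {x\<in>I. a \<bullet> v x = b}"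
  using assms unfolding exposed_subsets_def by blast

lemma hull_inter_supporting_hyperplane:
  fixes v :: "'i \<Rightarrow> 'a::euclidean_space"
  assumes fin: "finite I" and le: "\<forall>x\<in>I. a \<bullet> v x \<le> b"
  shows "convex hull (v ` I) \<inter> {y. a \<bullet> y = b} = convex hull (v ` {x\<in>I. a \<bullet> v x = b})"
    and "(convex hull (v ` I) \<inter> {y. a \<bullet> y = b}) face_of convex hull (v ` I)"
proof -
  have "convex hull (v ` I) \<subseteq> {y. a \<bullet> y \<le> b}"
    by (rule hull_minimal) (use le convex_halfspace_le in auto)
  then show face: "(convex hull (v ` I) \<inter> {y. a \<bullet> y = b}) face_of convex hull (v ` I)"
    by (intro face_of_Int_supporting_hyperplane_le) auto
  show "convex hull (v ` I) \<inter> {y. a \<bullet> y = b} = convex hull (v ` {x\<in>I. a \<bullet> v x = b})"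
  proof
    have "compact (v ` I)"
      using fin by (simp add: finite_imp_compact)
    then obtain S' where S': "S' \<subseteq> v ` I" "convex hull (v ` I) \<inter> {y. a \<bullet> y = b} = convex hull S'"
      using face_of_convex_hull_subset[OF _ face] by blast
    have "S' \<subseteq> convex hull (v ` I) \<inter> {y. a \<bullet> y = b}"
      unfolding S'(2) by (rule hull_subset)
    then have "S' \<subseteq> v ` {x\<in>I. a \<bullet> v x = b}"
      using S'(1) by fastforce
    then show "convex hull (v ` I) \<inter> {y. a \<bullet> y = b} \<subseteq> convex hull (v ` {x\<in>I. a \<bullet> v x = b})"
      unfolding S'(2) by (rule hull_mono)
  next
    have "convex hull (v ` {x\<in>I. a \<bullet> v x = b}) \<subseteq> {y. a \<bullet> y = b}"
      by (rule hull_minimal) (auto simp: convex_hyperplane)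
    moreover have "convex hull (v ` {x\<in>I. a \<bullet> v x = b}) \<subseteq> convex hull (v ` I)"
      by (rule hull_mono) auto
    ultimately show "convex hull (v ` {x\<in>I. a \<bullet> v x = b}) \<subseteq> convex hull (v ` I) \<inter> {y. a \<bullet> y = b}"
      by auto
  qed
qed

text \<open>Since faces of polytopes are exposed, the faces of dimension at most \<open>k\<close> of a polytope
  spanned by a finite family are exactly the hulls of its exposed index sets of that dimension.\<close>
lemma skeleton_convex_hull:
  fixes v :: "'i \<Rightarrow> 'a::euclidean_space"
  assumes fin: "finite I"
  shows "skeleton k (convex hull (v ` I)) =
           (\<lambda>S. convex hull (v ` S)) ` {S \<in> exposed_subsets v I. aff_dim (v ` S) \<le> k}"
proof (intro set_eqI iffI)
  fix F assume "F \<in> skeleton k (convex hull (v ` I))"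
  then have F: "F face_of convex hull (v ` I)" "aff_dim F \<le> k"
    by (auto simp: skeleton_def)
  have "polyhedron (convex hull (v ` I))"
    using fin by (simp add: polytope_convex_hull polytope_imp_polyhedron)
  then have "F exposed_face_of convex hull (v ` I)"
    using F(1) exposed_face_of_polyhedron by blast
  then obtain a b where ab: "convex hull (v ` I) \<subseteq> {y. a \<bullet> y \<le> b}"
      "F = convex hull (v ` I) \<inter> {y. a \<bullet> y = b}"
    unfolding exposed_face_of_def by blast
  have le: "\<forall>x\<in>I. a \<bullet> v x \<le> b"
    using ab(1) hull_subset[of "v ` I" convex] by auto
  define S where "S = {x\<in>I. a \<bullet> v x = b}"
  have "F = convex hull (v ` S)"
    using hull_inter_supporting_hyperplane(1)[OF fin le] ab(2) by (simp add: S_def)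
  moreover have "S \<in> exposed_subsets v I"
    using le S_def by (rule exposed_subsetsI)
  moreover have "aff_dim (v ` S) \<le> k"
    using F(2) \<open>F = convex hull (v ` S)\<close> by (simp add: aff_dim_convex_hull)
  ultimately show "F \<in> (\<lambda>S. convex hull (v ` S)) ` {S \<in> exposed_subsets v I. aff_dim (v ` S) \<le> k}"
    by blast
next
  fix F assume "F \<in> (\<lambda>S. convex hull (v ` S)) ` {S \<in> exposed_subsets v I. aff_dim (v ` S) \<le> k}"
  then obtain S where S: "S \<in> exposed_subsets v I" "aff_dim (v ` S) \<le> k" "F = convex hull (v ` S)"
    by blast
  obtain a b where ab: "\<forall>x\<in>I. a \<bullet> v x \<le> b" "S = {x\<in>I. a \<bullet> v x = b}"
    using S(1) by (rule exposed_subsetsE)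
  have "F face_of convex hull (v ` I)"
    using hull_inter_supporting_hyperplane[OF fin ab(1)] S(3) ab(2) by simp
  then show "F \<in> skeleton k (convex hull (v ` I))"
    using S(2,3) by (simp add: skeleton_def aff_dim_convex_hull)
qed

text \<open>On exposed index sets, taking convex hulls is an order embedding: a point of the family
  lies in the hull of an exposed subfamily only if it belongs to that subfamily.\<close>
lemma convex_hull_exposed_subset_iff:
  fixes v :: "'i \<Rightarrow> 'a::euclidean_space"
  assumes "S \<in> exposed_subsets v I" and "S' \<in> exposed_subsets v I"
  shows "convex hull (v ` S) \<subseteq> convex hull (v ` S') \<longleftrightarrow> S \<subseteq> S'"
proof
  obtain a b where S': "S' = {x\<in>I. a \<bullet> v x = b}"
    using assms(2) by (rule exposed_subsetsE)
  have S_sub: "S \<subseteq> I"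
    using assms(1) by (auto elim: exposed_subsetsE)
  have hyp: "convex hull (v ` S') \<subseteq> {y. a \<bullet> y = b}"
    by (rule hull_minimal) (auto simp: S' convex_hyperplane)
  assume "convex hull (v ` S) \<subseteq> convex hull (v ` S')"
  then have "v x \<in> {y. a \<bullet> y = b}" if "x \<in> S" for x
    using that hyp hull_inc[of "v x" "v ` S"] by blast
  then show "S \<subseteq> S'"
    using S_sub by (auto simp: S')
qed (simp add: hull_mono image_mono)

lemma bij_betw_skeleton_convex_hull:
  fixes v :: "'i \<Rightarrow> 'a::euclidean_space"
  assumes "finite I"
  shows "bij_betw (\<lambda>S. convex hull (v ` S)) {S \<in> exposed_subsets v I. aff_dim (v ` S) \<le> k}
           (skeleton k (convex hull (v ` I)))"
proof -
  have "inj_on (\<lambda>S. convex hull (v ` S)) (exposed_subsets v I)"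
  proof (rule inj_onI)
    fix S S' assume "S \<in> exposed_subsets v I" "S' \<in> exposed_subsets v I"
      and "convex hull (v ` S) = convex hull (v ` S')"
    then show "S = S'"
      using convex_hull_exposed_subset_iff[of S v I S'] convex_hull_exposed_subset_iff[of S' v I S]
      by auto
  qed
  then show ?thesis
    unfolding bij_betw_def skeleton_convex_hull[OF assms] by (auto intro: inj_on_subset)
qed

lemma skel_equiv_convex_hulls:
  fixes v :: "'i \<Rightarrow> 'a::euclidean_space" and w :: "'i \<Rightarrow> 'b::euclidean_space"
  assumes fin: "finite I"
    and same: "{S \<in> exposed_subsets v I. aff_dim (v ` S) \<le> k} =
               {S \<in> exposed_subsets w I. aff_dim (w ` S) \<le> k}"
  shows "skel_equiv k (convex hull (v ` I)) (convex hull (w ` I))"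
proof -
  define \<Phi> where "\<Phi> = {S \<in> exposed_subsets v I. aff_dim (v ` S) \<le> k}"
  define g where "g S = convex hull (v ` S)" for S
  define h where "h S = convex hull (w ` S)" for S
  have g: "bij_betw g \<Phi> (skeleton k (convex hull (v ` I)))"
    unfolding g_def \<Phi>_def using fin by (rule bij_betw_skeleton_convex_hull)
  have h: "bij_betw h \<Phi> (skeleton k (convex hull (w ` I)))"
    unfolding h_def \<Phi>_def same using fin by (rule bij_betw_skeleton_convex_hull)
  define f where "f = h \<circ> inv_into \<Phi> g"
  have "bij_betw f (skeleton k (convex hull (v ` I))) (skeleton k (convex hull (w ` I)))"
    unfolding f_def using bij_betw_inv_into[OF g] h by (rule bij_betw_trans)
  moreover have "F \<subseteq> G \<longleftrightarrow> f F \<subseteq> f G"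
    if "F \<in> skeleton k (convex hull (v ` I))" "G \<in> skeleton k (convex hull (v ` I))" for F G
  proof -
    have "F \<in> g ` \<Phi>" "G \<in> g ` \<Phi>"
      using that g by (simp_all add: bij_betw_def)
    then obtain S S' where S: "S \<in> \<Phi>" "S' \<in> \<Phi>" "F = g S" "G = g S'"
      by blast
    then have "f F = h S" "f G = h S'"
      using g by (simp_all add: f_def bij_betw_def)
    moreover have "g S \<subseteq> g S' \<longleftrightarrow> S \<subseteq> S'"
      using S(1,2) convex_hull_exposed_subset_iff[of S v I S'] by (simp add: g_def \<Phi>_def)
    moreover have "h S \<subseteq> h S' \<longleftrightarrow> S \<subseteq> S'"
      using S(1,2) convex_hull_exposed_subset_iff[of S w I S'] by (simp add: h_def \<Phi>_def same)
    ultimately show ?thesis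
      using S(3,4) by simp
  qed
  ultimately show ?thesis
    unfolding skel_equiv_def by blast
qed

section \<open>Prism configurations\<close>

text \<open>Vertex index sets of the faces of \<open>\<Delta>\<^sub>1 \<times> \<Delta>(M)\<close> of dimension at most \<open>k\<close>: the rectangles
  \<open>A \<times> T\<close> with \<open>A\<close> a nonempty set of vertices of \<open>\<Delta>\<^sub>1\<close> and \<open>T \<subseteq> M\<close>, where \<open>|A| + |T| \<le> k + 2\<close>.
  Taking \<open>T = {}\<close> gives the empty face.\<close>
definition prism_faces :: "nat \<Rightarrow> 'j set \<Rightarrow> (bool \<times> 'j) set set" where
  "prism_faces k M = {A \<times> T | A T. A \<noteq> {} \<and> T \<subseteq> M \<and> card A + card T \<le> k + 2}"

lemma nonempty_bool_set_cases:
  fixes A :: "bool set"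
  assumes "A \<noteq> {}"
  obtains "A = UNIV" | \<alpha> where "A = {\<alpha>}"
proof -
  have "A = UNIV \<or> A = {True} \<or> A = {False}"
    using assms unfolding set_eq_iff by (metis (full_types) empty_iff insert_iff UNIV_I)
  then show thesis
    using that by blast
qed

locale prism_config =
  fixes v :: "bool \<times> 'j \<Rightarrow> 'a::euclidean_space" and M :: "'j set" and u :: 'a and \<mu> :: "'j \<Rightarrow> real"
  assumes finite_base: "finite M"
    and top_eq: "\<And>m. m \<in> M \<Longrightarrow> v (True, m) = v (False, m) + \<mu> m *\<^sub>R u"
    and height_pos: "\<And>m. m \<in> M \<Longrightarrow> \<mu> m > 0"
begin

text \<open>Every exposed index set is a rectangle: by the sign of \<open>a \<bullet> u\<close> a supporting hyperplane
  contains only top points, only bottom points, or both points of each vertical edge it meets.\<close>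
lemma exposed_subset_rectangle:
  assumes "S \<in> exposed_subsets v (UNIV \<times> M)"
  obtains A T where "A \<noteq> {}" "T \<subseteq> M" "S = A \<times> T"
proof -
  obtain a b where le: "\<forall>x\<in>UNIV \<times> M. a \<bullet> v x \<le> b" and S: "S = {x\<in>UNIV \<times> M. a \<bullet> v x = b}"
    using assms by (rule exposed_subsetsE)
  define A where "A = (if a \<bullet> u > 0 then {True} else if a \<bullet> u < 0 then {False} else UNIV)"
  define T where "T = {m\<in>M. a \<bullet> v (False, m) = b \<or> a \<bullet> v (True, m) = b}"
  have "(\<alpha>, m) \<in> S \<longleftrightarrow> \<alpha> \<in> A \<and> m \<in> T" for \<alpha> m
  proof (cases "m \<in> M")
    case True
    define x y where "x = a \<bullet> v (False, m)" and "y = a \<bullet> v (True, m)"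
    have "y = x + \<mu> m * (a \<bullet> u)"
      using top_eq[OF True] by (simp add: x_def y_def inner_add_right)
    moreover have "0 < \<mu> m * (a \<bullet> u) \<longleftrightarrow> 0 < a \<bullet> u" "\<mu> m * (a \<bullet> u) < 0 \<longleftrightarrow> a \<bullet> u < 0"
      using height_pos[OF True] by (simp_all add: zero_less_mult_iff mult_less_0_iff)
    moreover have "x \<le> b" "y \<le> b"
      using le True by (auto simp: x_def y_def)
    ultimately show ?thesis
      using True by (cases \<alpha>) (auto simp: S A_def T_def x_def[symmetric] y_def[symmetric])
  qed (auto simp: S T_def)
  then have "S = A \<times> T"
    by auto
  moreover have "T \<subseteq> M"
    by (auto simp: T_def S)
  moreover have "A \<noteq> {}"
    by (simp add: A_def)
  ultimately show thesis
    using that by blast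
qed

text \<open>A
  rectangle with both levels spans a prism over its base; a one-level rectangle has few points.\<close>
lemma prism_face_aff_dim_le:
  assumes "S \<in> prism_faces k M"
  shows "aff_dim (v ` S) \<le> int k"
proof -
  obtain A T where S: "S = A \<times> T" and A: "A \<noteq> {}" and T: "T \<subseteq> M" and card: "card A + card T \<le> k + 2"
    using assms unfolding prism_faces_def by blast
  have fin_T: "finite T"
    using T finite_base finite_subset by blast
  from A show ?thesis
  proof (cases rule: nonempty_bool_set_cases)
    case 1
    have "v ` S = (\<lambda>m. v (False, m)) ` T \<union> (\<lambda>m. v (True, m)) ` T"
      using S 1 by (auto simp: image_iff) (metis (full_types))
    moreover have "aff_dim ((\<lambda>m. v (False, m)) ` T \<union> (\<lambda>m. v (True, m)) ` T) \<le> int (card T)"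
      using fin_T top_eq T by (intro aff_dim_prism_le) auto
    ultimately show ?thesis
      using card 1 by simp
  next
    case (2 \<alpha>)
    have fin_S: "finite S"
      using S fin_T by simp
    have "aff_dim (v ` S) \<le> int (card (v ` S)) - 1"
      using aff_dim_le_card[of "v ` S"] fin_S by simp
    also have "card (v ` S) \<le> card T"
      using card_image_le[OF fin_S, of v] S 2 by (simp add: card_cartesian_product)
    finally show ?thesis
      using card 2 by simp
  qed
qed

lemma rectangle_card_bound:
  assumes indep: "\<And>\<alpha> U. U \<subseteq> M \<Longrightarrow> card U \<le> k + 2 \<Longrightarrow> aff_dim (v ` ({\<alpha>} \<times> U)) = int (card U) - 1"
    and transversal: "\<And>U. U \<subseteq> M \<Longrightarrow> card U = k + 1 \<Longrightarrow>
                         \<exists>a b. (\<forall>m\<in>U. a \<bullet> v (False, m) = b) \<and> a \<bullet> u \<noteq> 0"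
    and A: "A \<noteq> {}" and T: "T \<subseteq> M" and dim: "aff_dim (v ` (A \<times> T)) \<le> int k"
  shows "card A + card T \<le> k + 2"
  using A
proof (cases rule: nonempty_bool_set_cases)
  case 1
  have "card T \<le> k"
  proof (rule ccontr)
    assume "\<not> card T \<le> k"
    then have "k + 1 \<le> card T"
      by simp
    then obtain U where U: "U \<subseteq> T" "card U = k + 1"
      by (rule obtain_subset_with_card_n)
    then have "U \<noteq> {}"
      by auto
    then obtain i0 where i0: "i0 \<in> U"
      by blast
    have UM: "U \<subseteq> M"
      using U(1) T by blast
    obtain a b where hyp: "\<forall>m\<in>U. a \<bullet> v (False, m) = b" and transv: "a \<bullet> u \<noteq> 0"
      using transversal[OF UM U(2)] by blast
    have "a \<bullet> v (True, i0) = b + \<mu> i0 * (a \<bullet> u)"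
      using top_eq[of i0] hyp i0 UM by (auto simp: inner_add_right)
    then have "a \<bullet> v (True, i0) \<noteq> b"
      using height_pos[of i0] i0 UM transv by auto
    then have "aff_dim (insert (v (True, i0)) (v ` ({False} \<times> U))) = aff_dim (v ` ({False} \<times> U)) + 1"
      using hyp by (intro aff_dim_insert_off_hyperplane) auto
    also have "aff_dim (v ` ({False} \<times> U)) = int k"
      using indep[OF UM] U(2) by simp
    finally have "aff_dim (insert (v (True, i0)) (v ` ({False} \<times> U))) = int k + 1" .
    moreover have "insert (v (True, i0)) (v ` ({False} \<times> U)) \<subseteq> v ` (A \<times> T)"
      using U(1) i0 1 by auto
    ultimately have "int k + 1 \<le> int k"
      using aff_dim_subset dim by (metis order.trans)
    then show False
      by simp
  qed
  then show ?thesis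
    using 1 by simp
next
  case (2 \<alpha>)
  have "card T \<le> k + 1"
  proof (rule ccontr)
    assume "\<not> card T \<le> k + 1"
    then have "k + 2 \<le> card T"
      by simp
    then obtain U where U: "U \<subseteq> T" "card U = k + 2"
      by (rule obtain_subset_with_card_n)
    have "aff_dim (v ` ({\<alpha>} \<times> U)) = int k + 1"
      using indep[of U \<alpha>] U T by auto
    moreover have "v ` ({\<alpha>} \<times> U) \<subseteq> v ` (A \<times> T)"
      using U(1) 2 by auto
    ultimately have "int k + 1 \<le> int k"
      using aff_dim_subset dim by (metis order.trans)
    then show False
      by simp
  qed
  then show ?thesis
    using 2 by simp
qed

lemma low_exposed_subsets_eq_prism_faces:
  assumes indep: "\<And>\<alpha> U. U \<subseteq> M \<Longrightarrow> card U \<le> k + 2 \<Longrightarrow> aff_dim (v ` ({\<alpha>} \<times> U)) = int (card U) - 1"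
    and transversal: "\<And>U. U \<subseteq> M \<Longrightarrow> card U = k + 1 \<Longrightarrow>
                         \<exists>a b. (\<forall>m\<in>U. a \<bullet> v (False, m) = b) \<and> a \<bullet> u \<noteq> 0"
    and exposed: "\<And>S. S \<in> prism_faces k M \<Longrightarrow> S \<in> exposed_subsets v (UNIV \<times> M)"
  shows "{S \<in> exposed_subsets v (UNIV \<times> M). aff_dim (v ` S) \<le> int k} = prism_faces k M"
proof (intro set_eqI iffI)
  fix S assume "S \<in> {S \<in> exposed_subsets v (UNIV \<times> M). aff_dim (v ` S) \<le> int k}"
  then have S: "S \<in> exposed_subsets v (UNIV \<times> M)" and dim: "aff_dim (v ` S) \<le> int k"
    by auto
  obtain A T where "A \<noteq> {}" "T \<subseteq> M" "S = A \<times> T"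
    using S by (rule exposed_subset_rectangle)
  moreover have "card A + card T \<le> k + 2"
    using rectangle_card_bound[OF indep transversal] calculation dim by blast
  ultimately show "S \<in> prism_faces k M"
    unfolding prism_faces_def by blast
qed (use exposed prism_face_aff_dim_le in blast)

end

lemma rectangle_exposed_by_slack:
  fixes v :: "bool \<times> 'j \<Rightarrow> 'a::euclidean_space"
  assumes "\<And>\<alpha> m. m \<in> M \<Longrightarrow> a \<bullet> v (\<alpha>, m) = b - X \<alpha> m"
    and "\<And>\<alpha> m. m \<in> M \<Longrightarrow> X \<alpha> m \<ge> 0"
    and "\<And>\<alpha> m. m \<in> M \<Longrightarrow> X \<alpha> m = 0 \<longleftrightarrow> \<alpha> \<in> A \<and> m \<in> T"
    and "T \<subseteq> M"
  shows "A \<times> T \<in> exposed_subsets v (UNIV \<times> M)"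
proof (rule exposed_subsetsI)
  show "\<forall>x\<in>UNIV \<times> M. a \<bullet> v x \<le> b"
    using assms(1,2) by fastforce
  have "a \<bullet> v (\<alpha>, m) = b \<longleftrightarrow> \<alpha> \<in> A \<and> m \<in> T" if "m \<in> M" for \<alpha> m
    using assms(1,3)[OF that] by auto
  then show "A \<times> T = {x\<in>UNIV \<times> M. a \<bullet> v x = b}"
    using assms(4) by auto
qed

section \<open>Real polynomials with prescribed zeros\<close>

definition root_poly :: "real set \<Rightarrow> real poly" where
  "root_poly X = (\<Prod>r\<in>X. [:- r, 1:])"

lemma root_poly:
  assumes "finite X"
  shows "degree (root_poly X) = card X" and "lead_coeff (root_poly X) = 1"
    and "poly (root_poly X) x = 0 \<longleftrightarrow> x \<in> X"
proof -
  show "degree (root_poly X) = card X"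
    using assms by (simp add: root_poly_def degree_prod_eq_sum_degree)
  show "lead_coeff (root_poly X) = 1"
    unfolding root_poly_def lead_coeff_prod by simp
  show "poly (root_poly X) x = 0 \<longleftrightarrow> x \<in> X"
    using assms by (simp add: root_poly_def poly_prod)
qed

lemma nonneg_poly_with_zeros:
  assumes "finite X" and "card X \<le> j"
  obtains p :: "real poly" where "degree p = 2 * j" and "lead_coeff p = 1"
    and "\<And>x. poly p x \<ge> 0" and "\<And>x. poly p x = 0 \<longleftrightarrow> x \<in> X"
proof
  define p where "p = root_poly X ^ 2 * [:1, 0, 1:] ^ (j - card X)"
  have pos: "poly [:1, 0, 1:] x > 0" for x :: real
    by (simp add: add_pos_nonneg)
  have "root_poly X \<noteq> 0"
    using root_poly(2)[OF assms(1)] by auto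
  then have sq: "degree (root_poly X ^ 2) = 2 * card X" "lead_coeff (root_poly X ^ 2) = 1"
    using root_poly[OF assms(1)] by (simp add: degree_power_eq, simp only: lead_coeff_power, simp)
  have pad: "degree ([:1, 0, 1:] ^ i :: real poly) = 2 * i" "lead_coeff ([:1, 0, 1:] ^ i :: real poly) = 1"
    for i
    by (simp add: degree_power_eq, simp only: lead_coeff_power, simp)
  have "degree p = degree (root_poly X ^ 2) + degree ([:1, 0, 1:] ^ (j - card X) :: real poly)"
    unfolding p_def by (rule degree_mult_eq) (use sq(2) pad(2) in auto)
  then show "degree p = 2 * j"
    using sq(1) pad(1) assms(2) by simp
  show "lead_coeff p = 1"
    using sq(2) pad(2) by (simp add: p_def lead_coeff_mult)
  show "poly p x \<ge> 0" for x
    using pos[of x] by (simp add: p_def poly_power)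
  show "poly p x = 0 \<longleftrightarrow> x \<in> X" for x
    using root_poly(3)[OF assms(1)] pos[of x] by (simp add: p_def poly_power)
qed

lemma sum_coeff_powers:
  fixes p :: "real poly"
  assumes "degree p \<le> D"
  shows "(\<Sum>j=1..D. coeff p j * x ^ j) = poly p x - coeff p 0"
proof -
  have "poly p x = (\<Sum>j\<le>D. coeff p j * x ^ j)"
    unfolding poly_altdef by (rule sum.mono_neutral_left) (use assms in \<open>auto simp: coeff_eq_0\<close>)
  also have "\<dots> = coeff p 0 + (\<Sum>j=1..D. coeff p j * x ^ j)"
    by (simp add: atMost_atLeast0 sum.atLeast_Suc_atMost)
  finally show ?thesis
    by simp
qed

section \<open>The prism over the moment curve\<close>

text \<open>The points of the statement: \<open>va m\<close> on the moment curve of degree \<open>D = 2k + 2\<close> and its lift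
  \<open>v (True, m)\<close>, whose last coordinate \<open>lam - t m ^ D\<close> exceeds \<open>t m ^ D\<close> by \<open>mu m > 0\<close>.\<close>
locale moment_prism =
  fixes k n D :: nat and t :: "nat \<Rightarrow> real" and e :: "nat \<Rightarrow> 'd::finite" and lam :: real
  assumes D: "D = 2 * k + 2" and n_ge: "D \<le> n"
    and t_mono: "\<And>i j. 1 \<le> i \<Longrightarrow> i < j \<Longrightarrow> j \<le> n + 1 \<Longrightarrow> t i < t j"
    and e_bij: "bij_betw e {1..D} (UNIV :: 'd set)"
    and lam_large: "\<And>m. m \<in> {1..n + 1} \<Longrightarrow> 2 * t m ^ D < lam"
begin

lemma coords_nth:
  assumes "j \<in> {1..D}"
  shows "coords e D f $ e j = f j"
  unfolding coords_def vec_lambda_beta bij_betw_inv_into_left[OF e_bij assms] ..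

lemma D_in_range: "D \<in> {1..D}"
  using D by simp

lemma inner_coords: "coords e D c \<bullet> coords e D f = (\<Sum>j=1..D. c j * f j)"
proof -
  have "coords e D c \<bullet> coords e D f = (\<Sum>i\<in>UNIV. coords e D c $ i * coords e D f $ i)"
    by (simp add: inner_vec_def)
  also have "\<dots> = (\<Sum>j=1..D. coords e D c $ e j * coords e D f $ e j)"
    by (rule sum.reindex_bij_betw[OF e_bij, symmetric])
  also have "\<dots> = (\<Sum>j=1..D. c j * f j)"
    by (rule sum.cong) (simp_all add: coords_nth)
  finally show ?thesis .
qed

definition va :: "nat \<Rightarrow> real^'d" where
  "va m = coords e D (\<lambda>j. t m ^ j)"

definition up :: "real^'d" where
  "up = axis (e D) 1"

definition mu :: "nat \<Rightarrow> real" where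
  "mu m = lam - 2 * t m ^ D"

definition v :: "bool \<times> nat \<Rightarrow> real^'d" where
  "v x = (if fst x then va (snd x) + mu (snd x) *\<^sub>R up else va (snd x))"

lemma up_coords: "up = coords e D (\<lambda>j. if j = D then 1 else 0)"
proof -
  have "inv_into {1..D} e (e D) = D"
    by (rule bij_betw_inv_into_left[OF e_bij D_in_range])
  moreover have "e (inv_into {1..D} e i) = i" for i
    by (rule bij_betw_inv_into_right[OF e_bij UNIV_I])
  ultimately have "i = e D \<longleftrightarrow> inv_into {1..D} e i = D" for i
    by metis
  then show ?thesis
    by (simp add: up_def coords_def vec_eq_iff axis_def)
qed

lemma v_top_coords: "v (True, m) = coords e D (\<lambda>j. if j = D then lam - t m ^ D else t m ^ j)"
  by (simp add: v_def va_def up_coords coords_def mu_def vec_eq_iff)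

lemma vertices_eq:
  "v ` (UNIV \<times> {1..n + 1}) = (\<lambda>i. coords e D (\<lambda>j. t i ^ j)) ` {1..n + 1} \<union>
     (\<lambda>i. coords e D (\<lambda>j. if j = D then lam - t i ^ D else t i ^ j)) ` {1..n + 1}"
  by (force simp: v_top_coords[symmetric] v_def va_def)

sublocale prism_config v "{1..n + 1}" up mu
proof
  show "m \<in> {1..n + 1} \<Longrightarrow> mu m > 0" for m
    using lam_large by (simp add: mu_def)
qed (simp_all add: v_def)

lemma inner_v: "a \<bullet> v (\<alpha>, m) = a \<bullet> va m + (if \<alpha> then mu m * a $ e D else 0)"
  by (simp add: v_def up_def inner_add_right inner_axis)

definition poly_functional :: "real poly \<Rightarrow> real^'d" where
  "poly_functional p = coords e D (coeff p)"

lemma poly_functional_va: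
  "degree p \<le> D \<Longrightarrow> poly_functional p \<bullet> va m = poly p (t m) - coeff p 0"
  unfolding poly_functional_def va_def inner_coords by (rule sum_coeff_powers)

lemma poly_functional_last: "poly_functional p $ e D = coeff p D"
  unfolding poly_functional_def using D_in_range by (rule coords_nth)

lemma t_inj: "inj_on t {1..n + 1}"
  by (rule strict_mono_on_imp_inj_on) (auto intro: t_mono simp: strict_mono_on_def)

lemma t_image_iff: "T \<subseteq> {1..n + 1} \<Longrightarrow> m \<in> {1..n + 1} \<Longrightarrow> t m \<in> t ` T \<longleftrightarrow> m \<in> T"
  using t_inj by (rule inj_on_image_mem_iff)

lemma card_t_image: "T \<subseteq> {1..n + 1} \<Longrightarrow> card (t ` T) = card T"
  using t_inj by (meson card_image inj_on_subset)

lemma aff_dim_by_root_polys: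
  fixes f :: "nat \<Rightarrow> real^'d"
  assumes U: "U \<subseteq> {1..n + 1}" and card_U: "card U \<le> B"
    and eval: "\<And>p m. degree p < B \<Longrightarrow> m \<in> {1..n + 1} \<Longrightarrow>
                  poly_functional p \<bullet> f m = poly p (t m) - coeff p 0"
  shows "aff_dim (f ` U) = int (card U) - 1"
proof (rule aff_dim_image_by_separation)
  show fin_U: "finite U"
    using U finite_subset by blast
  fix U' j assume U': "U' \<subseteq> U" "j \<in> U - U'"
  have U'_sub: "U' \<subseteq> {1..n + 1}"
    using U' U by auto
  have fin_U': "finite (t ` U')"
    using U'(1) fin_U by (meson finite_imageI finite_subset)
  define p where "p = root_poly (t ` U')"
  have "U' \<subset> U"
    using U' by blast
  then have "card U' < card U"
    by (rule psubset_card_mono[OF fin_U])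
  then have "degree p < B"
    using root_poly(1)[OF fin_U'] card_t_image[OF U'_sub] card_U by (simp add: p_def)
  then have val: "poly_functional p \<bullet> f m = poly p (t m) - coeff p 0 \<and>
      (poly p (t m) = 0 \<longleftrightarrow> m \<in> U')" if "m \<in> U" for m
  proof -
    have m: "m \<in> {1..n + 1}"
      using that U by blast
    show ?thesis
      using eval[OF \<open>degree p < B\<close> m] root_poly(3)[OF fin_U'] t_image_iff[OF U'_sub m]
      by (simp add: p_def)
  qed
  show "\<exists>a b. (\<forall>i\<in>U'. a \<bullet> f i = b) \<and> a \<bullet> f j \<noteq> b"
    using val U' by (intro exI[of _ "poly_functional p"] exI[of _ "- coeff p 0"]) auto
qed

lemma moment_curve_indep:
  "U \<subseteq> {1..n + 1} \<Longrightarrow> card U \<le> D + 1 \<Longrightarrow> aff_dim (va ` U) = int (card U) - 1"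
  by (rule aff_dim_by_root_polys) (auto intro: poly_functional_va)

lemma level_indep:
  assumes "U \<subseteq> {1..n + 1}" and "card U \<le> D"
  shows "aff_dim (v ` ({\<alpha>} \<times> U)) = int (card U) - 1"
proof -
  have "v ` ({\<alpha>} \<times> U) = (\<lambda>m. v (\<alpha>, m)) ` U"
    by auto
  also have "aff_dim \<dots> = int (card U) - 1"
    using assms
    by (rule aff_dim_by_root_polys) (simp add: inner_v poly_functional_va poly_functional_last coeff_eq_0)
  finally show ?thesis .
qed

text \<open>Any \<open>k + 1\<close> bottom points lie on a hyperplane transversal to \<open>up\<close>: the functional of their
  root polynomial multiplied by \<open>x ^ (D - k - 1)\<close>, a monic polynomial of degree \<open>D\<close>.\<close>
lemma transversal_hyperplane:
  assumes U: "U \<subseteq> {1..n + 1}" and card_U: "card U = k + 1"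
  shows "\<exists>a b. (\<forall>m\<in>U. a \<bullet> v (False, m) = b) \<and> a \<bullet> up \<noteq> 0"
proof -
  have fin_U: "finite (t ` U)"
    using U finite_subset by blast
  define r where "r = root_poly (t ` U)"
  define p where "p = r * monom 1 (D - (k + 1))"
  have r: "degree r = k + 1" "lead_coeff r = 1"
    using root_poly[OF fin_U] card_t_image[OF U] card_U by (simp_all add: r_def)
  have "degree p = degree r + degree (monom (1::real) (D - (k + 1)))"
    unfolding p_def by (rule degree_mult_eq) (use r in auto)
  then have deg: "degree p = D"
    using r(1) D by (simp add: degree_monom_eq)
  have "lead_coeff p = 1"
    unfolding p_def lead_coeff_mult using r(2) by (simp add: degree_monom_eq)
  then have "coeff p D = 1"
    using deg by simp
  moreover have "poly p (t m) = 0" if "m \<in> U" for m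
    using root_poly(3)[OF fin_U] that by (simp add: p_def r_def)
  ultimately show ?thesis
    using deg by (intro exI[of _ "poly_functional p"] exI[of _ "- coeff p 0"])
      (simp add: v_def poly_functional_va up_def inner_axis poly_functional_last)
qed

lemma separating_poly:
  assumes T: "T \<subseteq> {1..n + 1}" and card_T: "card T \<le> j"
  obtains p where "degree p = 2 * j" and "lead_coeff p = 1" and "\<And>x. poly p x \<ge> 0"
    and "\<And>m. m \<in> {1..n + 1} \<Longrightarrow> poly p (t m) = 0 \<longleftrightarrow> m \<in> T"
proof -
  have zeros: "finite (t ` T)" "card (t ` T) \<le> j"
    using T card_T card_t_image[OF T] finite_subset by auto
  obtain p where "degree p = 2 * j" "lead_coeff p = 1" "\<And>x. poly p x \<ge> 0"
      "\<And>x. poly p x = 0 \<longleftrightarrow> x \<in> t ` T"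
    using nonneg_poly_with_zeros[OF zeros] by blast
  then show thesis
    using that t_image_iff[OF T] by metis
qed

text \<open>Each rectangle of \<open>prism_faces k {1..n+1}\<close> is exposed, by the functional of a nonnegative
  polynomial vanishing exactly at the chosen parameters: of degree below \<open>D\<close> for rectangles with
  both levels, of degree \<open>D\<close> for bottom rectangles; for top rectangles a multiple of \<open>up\<close> is added
  so that the top level is favoured instead.\<close>
lemma full_rectangle_exposed:
  assumes T: "T \<subseteq> {1..n + 1}" and card_T: "card T \<le> k"
  shows "UNIV \<times> T \<in> exposed_subsets v (UNIV \<times> {1..n + 1})"
proof -
  obtain p where p: "degree p = 2 * card T" "\<And>x. poly p x \<ge> 0"
      "\<And>m. m \<in> {1..n + 1} \<Longrightarrow> poly p (t m) = 0 \<longleftrightarrow> m \<in> T"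
    using separating_poly[OF T order_refl] by metis
  have "degree (- p) < D"
    using p(1) card_T D by simp
  then have "poly_functional (- p) \<bullet> v (\<alpha>, m) = coeff p 0 - poly p (t m)" for \<alpha> m
    by (simp add: inner_v poly_functional_va poly_functional_last coeff_eq_0)
  then show ?thesis
    by (rule rectangle_exposed_by_slack) (use p(2,3) T in auto)
qed

lemma bottom_rectangle_exposed:
  assumes T: "T \<subseteq> {1..n + 1}" and card_T: "card T \<le> k + 1"
  shows "{False} \<times> T \<in> exposed_subsets v (UNIV \<times> {1..n + 1})"
proof -
  obtain p where p: "degree p = 2 * (k + 1)" "lead_coeff p = 1" "\<And>x. poly p x \<ge> 0"
      "\<And>m. m \<in> {1..n + 1} \<Longrightarrow> poly p (t m) = 0 \<longleftrightarrow> m \<in> T"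
    using separating_poly[OF T card_T] by metis
  then have pD: "degree p = D" "coeff p D = 1"
    using D by simp_all
  have lifted_slack_pos: "poly p (t m) + mu m > 0" if "m \<in> {1..n + 1}" for m
    using p(3)[of "t m"] height_pos[OF that] by linarith
  have "poly_functional (- p) \<bullet> v (\<alpha>, m) =
      coeff p 0 - (if \<alpha> then poly p (t m) + mu m else poly p (t m))" for \<alpha> m
    using pD by (simp add: inner_v poly_functional_va poly_functional_last)
  then show ?thesis
  proof (rule rectangle_exposed_by_slack[OF _ _ _ T])
    fix \<alpha> m assume m: "m \<in> {1..n + 1}"
    show "0 \<le> (if \<alpha> then poly p (t m) + mu m else poly p (t m))"
      using p(3)[of "t m"] lifted_slack_pos[OF m] by simp
    show "(if \<alpha> then poly p (t m) + mu m else poly p (t m)) = 0 \<longleftrightarrow> \<alpha> \<in> {False} \<and> m \<in> T"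
      using p(4)[OF m] lifted_slack_pos[OF m] by auto
  qed
qed

lemma top_rectangle_exposed:
  assumes T: "T \<subseteq> {1..n + 1}" and card_T: "card T \<le> k + 1"
  shows "{True} \<times> T \<in> exposed_subsets v (UNIV \<times> {1..n + 1})"
proof -
  obtain p where p: "degree p = 2 * (k + 1)" "lead_coeff p = 1" "\<And>x. poly p x \<ge> 0"
      "\<And>m. m \<in> {1..n + 1} \<Longrightarrow> poly p (t m) = 0 \<longleftrightarrow> m \<in> T"
    using separating_poly[OF T card_T] by metis
  then have pD: "degree p = D" "coeff p D = 1"
    using D by simp_all
  have lifted_slack_pos: "poly p (t m) + mu m > 0" if "m \<in> {1..n + 1}" for m
    using p(3)[of "t m"] height_pos[OF that] by linarith
  have up_va: "up \<bullet> va m = t m ^ D" for m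
    by (simp add: up_def inner_axis' va_def coords_nth[OF D_in_range])
  have "(poly_functional (- p) + 2 *\<^sub>R up) \<bullet> v (\<alpha>, m) =
      coeff p 0 + lam - (if \<alpha> then poly p (t m) else poly p (t m) + mu m)" for \<alpha> m
    using pD up_va[of m]
    by (simp add: inner_v poly_functional_va poly_functional_last inner_add_left up_def mu_def)
  then show ?thesis
  proof (rule rectangle_exposed_by_slack[OF _ _ _ T])
    fix \<alpha> m assume m: "m \<in> {1..n + 1}"
    show "0 \<le> (if \<alpha> then poly p (t m) else poly p (t m) + mu m)"
      using p(3)[of "t m"] lifted_slack_pos[OF m] by simp
    show "(if \<alpha> then poly p (t m) else poly p (t m) + mu m) = 0 \<longleftrightarrow> \<alpha> \<in> {True} \<and> m \<in> T"
      using p(4)[OF m] lifted_slack_pos[OF m] by auto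
  qed
qed

text \<open>Hence the exposed index sets of dimension at most \<open>k\<close> of the moment prism are those of
  \<open>\<Delta>\<^sub>1 \<times> \<Delta>\<^sub>n\<close>; here \<open>k + 2 \<le> D\<close> makes any \<open>k + 2\<close> points of a level independent.\<close>
lemma low_exposed_subsets:
  "{S \<in> exposed_subsets v (UNIV \<times> {1..n + 1}). aff_dim (v ` S) \<le> int k} = prism_faces k {1..n + 1}"
proof (rule low_exposed_subsets_eq_prism_faces)
  show "aff_dim (v ` ({\<alpha>} \<times> U)) = int (card U) - 1"
    if "U \<subseteq> {1..n + 1}" "card U \<le> k + 2" for \<alpha> U
    using that D by (intro level_indep) auto
  show "\<exists>a b. (\<forall>m\<in>U. a \<bullet> v (False, m) = b) \<and> a \<bullet> up \<noteq> 0"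
    if "U \<subseteq> {1..n + 1}" "card U = k + 1" for U
    using that by (rule transversal_hyperplane)
  fix S assume "S \<in> prism_faces k {1..n + 1}"
  then obtain A T where S: "S = A \<times> T" and A: "A \<noteq> {}" and T: "T \<subseteq> {1..n + 1}"
    and card: "card A + card T \<le> k + 2"
    unfolding prism_faces_def by blast
  from A show "S \<in> exposed_subsets v (UNIV \<times> {1..n + 1})"
  proof (cases rule: nonempty_bool_set_cases)
    case 1
    then show ?thesis
      using full_rectangle_exposed[OF T] card S by simp
  next
    case (2 \<alpha>)
    then show ?thesis
      using bottom_rectangle_exposed[OF T] top_rectangle_exposed[OF T] card S by (cases \<alpha>) simp_all
  qed
qed

text \<open>The polytope is full-dimensional: it contains \<open>D + 1\<close> points of the moment curve.\<close>
lemma aff_dim_moment_prism: "aff_dim (convex hull (v ` (UNIV \<times> {1..n + 1}))) = int D"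
proof (rule order_antisym)
  have "CARD('d) = D"
    using bij_betw_same_card[OF e_bij] by simp
  then show "aff_dim (convex hull (v ` (UNIV \<times> {1..n + 1}))) \<le> int D"
    using aff_dim_le_DIM[of "convex hull (v ` (UNIV \<times> {1..n + 1}))"] by simp
  have U: "{1..D + 1} \<subseteq> {1..n + 1}"
    using n_ge by auto
  have "int D = aff_dim (va ` {1..D + 1})"
    using moment_curve_indep[OF U] by simp
  also have "\<dots> \<le> aff_dim (v ` (UNIV \<times> {1..n + 1}))"
    using U by (intro aff_dim_subset) (force simp: v_def)
  finally show "int D \<le> aff_dim (convex hull (v ` (UNIV \<times> {1..n + 1})))"
    by (simp add: aff_dim_convex_hull)
qed

end

section \<open>The product of simplices \<open>\<Delta>\<^sub>1 \<times> \<Delta>\<^sub>n\<close>\<close>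

lemma std_simplex_eq_convex_hull_axis:
  "(std_simplex :: (real^'n) set) = convex hull (range (\<lambda>i. axis i 1))"
proof
  have "convex (std_simplex :: (real^'n) set)"
    unfolding std_simplex_def convex_def
    by (auto simp: sum.distrib simp flip: sum_distrib_left)
  moreover have "range (\<lambda>i. axis i (1::real)) \<subseteq> (std_simplex :: (real^'n) set)"
    by (auto simp: std_simplex_def axis_def)
  ultimately show "convex hull (range (\<lambda>i. axis i 1)) \<subseteq> (std_simplex :: (real^'n) set)"
    by (simp add: hull_minimal)
  show "(std_simplex :: (real^'n) set) \<subseteq> convex hull (range (\<lambda>i. axis i 1))"
  proof
    fix x :: "real^'n" assume "x \<in> std_simplex"
    then have "(\<Sum>i\<in>UNIV. x $ i *\<^sub>R axis i (1::real)) \<in> convex hull (range (\<lambda>i. axis i 1))"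
      by (intro convex_sum) (auto simp: std_simplex_def intro: hull_inc)
    moreover have "(\<Sum>i\<in>UNIV. x $ i *\<^sub>R (axis i 1 :: real^'n)) = x"
      using basis_expansion[of x] by (simp add: scalar_mult_eq_scaleR)
    ultimately show "x \<in> convex hull (range (\<lambda>i. axis i 1))"
      by simp
  qed
qed

text \<open>The two vertices of \<open>\<Delta>\<^sub>1\<close> sit at the unit vectors of \<open>real^2\<close>.\<close>
definition vertex2 :: "bool \<Rightarrow> 2" where
  "vertex2 \<alpha> = (if \<alpha> then 2 else 1)"

lemma vertex2_inj: "inj vertex2"
  unfolding inj_def vertex2_def by simp

lemma vertex2_surj: "range vertex2 = UNIV"
  unfolding vertex2_def using UNIV_2 by auto

locale simplex_product =
  fixes n :: nat and idx :: "nat \<Rightarrow> 'm::finite"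
  assumes idx_bij: "bij_betw idx {1..n + 1} (UNIV :: 'm set)"
begin

definition w :: "bool \<times> nat \<Rightarrow> (real^2) \<times> (real^'m)" where
  "w x = (axis (vertex2 (fst x)) 1, axis (idx (snd x)) 1)"

lemma inner_w: "(a, c) \<bullet> w (\<alpha>, m) = a $ vertex2 \<alpha> + c $ idx m"
  by (simp add: w_def inner_axis)

lemma idx_inj: "inj_on idx {1..n + 1}"
  using idx_bij by (simp add: bij_betw_def)

sublocale prism_config w "{1..n + 1}" "(axis 2 1 - axis 1 1, 0)" "\<lambda>_. 1"
  by unfold_locales (simp_all add: w_def vertex2_def)

lemma product_eq_convex_hull:
  "(std_simplex :: (real^2) set) \<times> (std_simplex :: (real^'m) set) =
     convex hull (w ` (UNIV \<times> {1..n + 1}))"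
proof -
  have "w ` (UNIV \<times> {1..n + 1}) =
      (\<lambda>\<alpha>. axis (vertex2 \<alpha>) (1::real)) ` UNIV \<times> (\<lambda>m. axis (idx m) (1::real)) ` {1..n + 1}"
  proof -
    have w_eq: "w = map_prod (\<lambda>\<alpha>. axis (vertex2 \<alpha>) (1::real)) (\<lambda>m. axis (idx m) (1::real))"
      by (simp add: fun_eq_iff w_def)
    show ?thesis
      unfolding w_eq by (rule map_prod_surj_on[OF refl refl])
  qed
  also have "(\<lambda>\<alpha>. axis (vertex2 \<alpha>) (1::real)) ` UNIV = range (\<lambda>i::2. axis i 1)"
    using image_image[of "\<lambda>i::2. axis i (1::real)" vertex2 UNIV] vertex2_surj by simp
  also have "(\<lambda>m. axis (idx m) (1::real)) ` {1..n + 1} = range (\<lambda>i::'m. axis i 1)"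
    using image_image[of "\<lambda>i::'m. axis i (1::real)" idx "{1..n + 1}"] idx_bij
    by (simp add: bij_betw_def)
  finally show ?thesis
    by (simp add: convex_hull_Times std_simplex_eq_convex_hull_axis)
qed

text \<open>The vertices of either copy of \<open>\<Delta>\<^sub>n\<close> are affinely independent, each being separated from
  the others by the functional of its coordinate.\<close>
lemma level_indep:
  assumes U: "U \<subseteq> {1..n + 1}"
  shows "aff_dim (w ` ({\<alpha>} \<times> U)) = int (card U) - 1"
proof -
  have "w ` ({\<alpha>} \<times> U) = (\<lambda>m. w (\<alpha>, m)) ` U"
    by auto
  also have "aff_dim \<dots> = int (card U) - 1"
  proof (rule aff_dim_image_by_separation)
    show "finite U"
      using U finite_subset by blast
    fix U' j assume U': "U' \<subseteq> U" "j \<in> U - U'"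
    have "idx i \<noteq> idx j" if "i \<in> U'" for i
    proof -
      have "i \<in> {1..n + 1}" "j \<in> {1..n + 1}" "i \<noteq> j"
        using that U U' by auto
      then show ?thesis
        using inj_onD[OF idx_inj] by blast
    qed
    then show "\<exists>a b. (\<forall>i\<in>U'. a \<bullet> w (\<alpha>, i) = b) \<and> a \<bullet> w (\<alpha>, j) \<noteq> b"
      by (intro exI[of _ "(0, axis (idx j) 1)"] exI[of _ 0]) (simp add: inner_w axis_def)
  qed
  finally show ?thesis .
qed

text \<open>The first coordinate of the second vertex of \<open>\<Delta>\<^sub>1\<close> vanishes on the bottom level and is
  transversal to the prism direction.\<close>
lemma transversal_hyperplane:
  "\<exists>a b. (\<forall>m\<in>U. a \<bullet> w (False, m) = b) \<and> a \<bullet> (axis 2 1 - axis 1 1, 0 :: real^'m) \<noteq> 0"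
proof -
  have "(1::2) \<noteq> 2"
    by simp
  then have "(axis 2 1, 0 :: real^'m) \<bullet> w (False, m) = 0" for m
    by (simp add: inner_w vertex2_def axis_def)
  moreover have "(axis 2 1 :: real^2, 0 :: real^'m) \<bullet> (axis 2 1 - axis 1 1, 0) = 1"
    using \<open>(1::2) \<noteq> 2\<close> by (simp add: inner_diff_right inner_axis_axis)
  ultimately show ?thesis
    by (intro exI[of _ "(axis 2 1, 0)"] exI[of _ 0]) simp
qed

lemma rectangle_exposed:
  assumes T: "T \<subseteq> {1..n + 1}"
  shows "A \<times> T \<in> exposed_subsets w (UNIV \<times> {1..n + 1})"
proof (rule rectangle_exposed_by_slack[OF _ _ _ T])
  define a :: "real^2" where "a = (\<chi> i. if i \<in> vertex2 ` A then 0 else -1)"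
  define c :: "real^'m" where "c = (\<chi> i. if i \<in> idx ` T then 0 else -1)"
  fix \<alpha> m assume m: "m \<in> {1..n + 1}"
  have "idx m \<in> idx ` T \<longleftrightarrow> m \<in> T"
    using idx_inj m T by (rule inj_on_image_mem_iff)
  then show "(a, c) \<bullet> w (\<alpha>, m) = 0 - ((if \<alpha> \<in> A then 0 else 1) + (if m \<in> T then 0 else 1))"
    by (simp add: inner_w a_def c_def inj_image_mem_iff[OF vertex2_inj])
qed auto

lemma low_exposed_subsets:
  "{S \<in> exposed_subsets w (UNIV \<times> {1..n + 1}). aff_dim (w ` S) \<le> int k} = prism_faces k {1..n + 1}"
  by (rule low_exposed_subsets_eq_prism_faces)
    (use level_indep transversal_hyperplane rectangle_exposed in \<open>auto simp: prism_faces_def\<close>)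

end

text \<open>For every admissible height \<open>lam\<close> the moment prism is a \<open>D\<close>-dimensional polytope whose
  \<open>k\<close>-skeleton is that of \<open>\<Delta>\<^sub>1 \<times> \<Delta>\<^sub>n\<close>: both families have \<open>prism_faces k {1..n+1}\<close> as their
  exposed index sets of dimension at most \<open>k\<close>.\<close>
lemma (in moment_prism) psn:
  assumes "CARD('m::finite) = n + 1"
  shows "let P = convex hull
          ((\<lambda>i. coords e D (\<lambda>j. t i ^ j)) ` {1..n + 1} \<union>
           (\<lambda>i. coords e D (\<lambda>j. if j = D then lam - t i ^ D else t i ^ j)) ` {1..n + 1})
     in polytope P \<and> aff_dim P = int D \<and>
        skel_equiv (int k) P ((std_simplex :: (real^2) set) \<times> (std_simplex :: (real^'m) set))"
proof -
  obtain idx :: "nat \<Rightarrow> 'm" where "bij_betw idx {1..n + 1} UNIV"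
    using ex_bij_betw_nat_finite_1[of "UNIV :: 'm set"] assms by auto
  then interpret Q: simplex_product n idx
    by unfold_locales
  have "skel_equiv (int k) (convex hull (v ` (UNIV \<times> {1..n + 1})))
      (convex hull (Q.w ` (UNIV \<times> {1..n + 1})))"
    by (rule skel_equiv_convex_hulls) (simp, simp only: low_exposed_subsets Q.low_exposed_subsets)
  then show ?thesis
    unfolding Let_def vertices_eq[symmetric] Q.product_eq_convex_hull
    using aff_dim_moment_prism by (simp add: polytope_convex_hull)
qed

lemma eventually_above_finite:
  fixes M :: "'i set" and f :: "'i \<Rightarrow> real"
  assumes "finite M"
  shows "\<exists>c. \<forall>lam\<ge>c. \<forall>m\<in>M. f m < lam"
proof (intro exI allI impI ballI)
  fix lam m assume lam: "1 + (\<Sum>m\<in>M. \<bar>f m\<bar>) \<le> lam" and m: "m \<in> M"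
  have "\<bar>f m\<bar> \<le> (\<Sum>m\<in>M. \<bar>f m\<bar>)"
    using m assms by (intro member_le_sum) auto
  then show "f m < lam"
    using lam by linarith
qed

theorem proposition2p3:
  fixes k n :: nat
    and t :: "nat \<Rightarrow> real"
    and e :: "nat \<Rightarrow> 'd::finite"
  assumes "n \<ge> 2 * k + 2"
    and "\<And>i j. 1 \<le> i \<Longrightarrow> i < j \<Longrightarrow> j \<le> n + 1 \<Longrightarrow> t i < t j"
    and "CARD('d) = 2 * k + 2"
    and "bij_betw e {1..2 * k + 2} (UNIV :: 'd set)"
    and "CARD('m::finite) = n + 1"
  shows "\<exists>lam0::real. \<forall>lam\<ge>lam0.
    (let P = convex hull
          ((\<lambda>i. coords e (2 * k + 2) (\<lambda>j. t i ^ j)) ` {1..n + 1} \<union>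
           (\<lambda>i. coords e (2 * k + 2)
                 (\<lambda>j. if j = 2 * k + 2 then lam - t i ^ (2 * k + 2) else t i ^ j)) ` {1..n + 1})
     in polytope P \<and> aff_dim P = int (2 * k + 2) \<and>
        skel_equiv (int k) P ((std_simplex :: (real^2) set) \<times> (std_simplex :: (real^'m) set)))"
proof -
  obtain lam0 where "\<forall>lam\<ge>lam0. \<forall>m\<in>{1..n + 1}. 2 * t m ^ (2 * k + 2) < lam"
    using eventually_above_finite[of "{1..n + 1}" "\<lambda>m. 2 * t m ^ (2 * k + 2)"] by auto
  then have "moment_prism k n (2 * k + 2) t e lam" if "lam \<ge> lam0" for lam
    using assms that by unfold_locales auto
  then show ?thesis
    using moment_prism.psn[OF _ assms(5)] by blast
qed

end
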